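(* Let $n\ge 2$ and $1\le r\le n-1$ be integers. For every integer $m\ge 1$ define on $[-1,1]$ \[ \mathcal{T}_m(x)=\frac{\sqrt{1-x^2}\,T_m'(x)}{m^2}, \] where $T_m(x)=\cos(m\cos^{-1}x)$ is the Chebyshev polynomial of the first kind of degree $m$. For a sign vector $\varepsilon=(\varepsilon_1,\dots,\varepsilon_r)\in\{-1,+1\}^r$ put $m_0=n$, $m_i=m_{i-1}+\varepsilon_i$ for $1\le i\le r$, and \[ \beta_{n,r}(\varepsilon)=\prod_{i=1}^{r}2m_{i-1}. \] Enumerate the $2^r$ sign vectors as $\varepsilon^{(1)},\dots,\varepsilon^{(2^r)}$ in lexicographic order with $-1<+1$ (with $\varepsilon_1$ the most significant entry), and write $\beta^j_{n,r}=\beta_{n,r}(\varepsilon^{(j)})$. Then for all $x\in(-1,1)$, \[ \mathcal{T}_n(x)=\frac{d^r}{dx^r}\left(\sum_{j=1}^{2^r}\Big(\prod_{i=1}^r\varepsilon^{(j)}_i\Big)\frac{\mathcal{T}_{\,n+\varepsilon^{(j)}_1+\cdots+\varepsilon^{(j)}_r}(x)}{\beta^j_{n,r}}\right), \] i.e. $\mathcal{T}_n=\Big(\frac{(-1)^r\mathcal{T}_{n-r}}{\beta^1_{n,r}}+\frac{(-1)^{r-1}\mathcal{T}_{n-r+2}}{\beta^2_{n,r}}+\cdots-\frac{\mathcal{T}_{n+r-2}}{\beta^{2^r-1}_{n,r}}+\frac{\mathcal{T}_{n+r}}{\beta^{2^r}_{n,r}}\Big)^{(r)}$. Moreover \[ \beta^1_{n,r}=\beta^2_{n,r}=\prod_{i=1}^{r}(2n-2i+2),\qquad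 \beta^{2^r-1}_{n,r}=\beta^{2^r}_{n,r}=\prod_{i=1}^{r}(2n+2i-2), \] and for every $1\le j\le 2^{r-1}$, \[ \beta^1_{n,r}=\beta^2_{n,r}\le \beta^{2j-1}_{n,r}=\beta^{2j}_{n,r}\le\beta^{2^r-1}_{n,r}=\beta^{2^r}_{n,r}. \]
   Context: $T_m(x)=\cos(m\cos^{-1}x)$ denotes the Chebyshev polynomial of the first kind; $\mathcal{T}_m$ is the scaled quantity defined in the claim. The superscript $(r)$ denotes the $r$-th derivative with respect to $x$. *)

theory Defs
  imports "HOL-Analysis.Analysis" "HOL-Library.List_Lexorder"
begin

definition cheb :: "nat \<Rightarrow> real \<Rightarrow> real" where
  "cheb m x = cos (real m * arccos x)"

definition chebS :: "nat \<Rightarrow> real \<Rightarrow> real" where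
  "chebS m x = sqrt (1 - x^2) * deriv (cheb m) x / (real m)^2"

text \<open>Sign vectors of length r, as integer lists with entries in {-1,1}
  (entry k of the list is epsilon_(k+1)).\<close>
definition signvecs :: "nat \<Rightarrow> int list set" where
  "signvecs r = {xs. length xs = r \<and> set xs \<subseteq> {-1, 1}}"

definition sv :: "nat \<Rightarrow> nat \<Rightarrow> int list" where
  "sv r j = sorted_list_of_set (signvecs r) ! (j - 1)"

definition mseq :: "nat \<Rightarrow> int list \<Rightarrow> nat \<Rightarrow> int" where
  "mseq n eps i = int n + (\<Sum>k<i. eps ! k)"

definition beta :: "nat \<Rightarrow> int list \<Rightarrow> real" where
  "beta n eps = (\<Prod>i=1..length eps. 2 * of_int (mseq n eps (i - 1)))"

end

theory Submission
  imports Defs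
begin

(* Put x = cos theta on (-1,1). Then chebS m x = sin (m theta) / m, and since
   d/dx (sin (t theta) / t) = - cos (t theta) / sin theta and
   cos ((M-1) theta) - cos ((M+1) theta) = 2 sin (M theta) sin theta, the function
   sin (M theta) / M is the derivative of the difference of its neighbours of degree M + 1 and
   M - 1, divided by 2 M. Applying this r times, each step replacing the degree m_(i-1) by
   m_(i-1) +- 1 with weight +-1 / (2 m_(i-1)), writes chebS n as the r-th derivative of the
   signed sum over all sign vectors. In the lexicographic enumeration the vectors 2j-1 and 2j
   differ only in their last sign, which beta ignores; and as each factor 2 m_(i-1) lies between
   2 (n-i+1) and 2 (n+i-1), beta is extremal at the constant vectors, which come first and last. *)

definition sin_arccos_div :: "real \<Rightarrow> real \<Rightarrow> real" where
  "sin_arccos_div t x = sin (t * arccos x) / t"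

lemma chebS_eq_sin_arccos_div:
  assumes "-1 < x" "x < 1"
  shows "chebS m x = sin_arccos_div (real m) x"
proof (cases "m = 0")
  case True
  then show ?thesis by (simp add: chebS_def sin_arccos_div_def)
next
  case False
  have "sqrt (1 - x^2) > 0"
    using assms by (simp add: abs_square_less_1)
  moreover have "(cheb m has_real_derivative
      - sin (real m * arccos x) * (real m * inverse (- sqrt (1 - x^2)))) (at x)"
    unfolding cheb_def[abs_def] by (intro derivative_eq_intros DERIV_arccos assms) auto
  ultimately show ?thesis
    using False
    by (simp add: DERIV_imp_deriv chebS_def sin_arccos_div_def field_simps power2_eq_square)
qed

lemma has_real_derivative_sin_arccos_div:
  assumes "-1 < x" "x < 1" "t \<noteq> 0"
  shows "(sin_arccos_div t has_real_derivative - cos (t * arccos x) / sqrt (1 - x^2)) (at x)"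
proof -
  have "(sin_arccos_div t has_real_derivative
          cos (t * arccos x) * (t * inverse (- sqrt (1 - x^2))) / t) (at x)"
    unfolding sin_arccos_div_def[abs_def] by (intro derivative_eq_intros DERIV_arccos assms) auto
  then show ?thesis
    using assms by (simp add: field_simps)
qed

lemma sin_arccos_div_three_term:
  assumes "-1 < x" "x < 1" "M \<notin> {-1, 0, 1}"
  shows "((\<lambda>y. (sin_arccos_div (M + 1) y - sin_arccos_div (M - 1) y) / (2 * M))
           has_real_derivative sin_arccos_div M x) (at x)"
proof -
  define \<theta> where "\<theta> = arccos x"
  have sin_\<theta>: "sin \<theta> = sqrt (1 - x^2)"
    unfolding \<theta>_def using assms by (simp add: sin_arccos)
  have pos: "sin \<theta> > 0"
    unfolding sin_\<theta> using assms by (simp add: abs_square_less_1)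
  have "((\<lambda>y. (sin_arccos_div (M + 1) y - sin_arccos_div (M - 1) y) / (2 * M))
      has_real_derivative (cos ((M - 1) * \<theta>) - cos ((M + 1) * \<theta>)) / sin \<theta> / (2 * M)) (at x)"
    unfolding \<theta>_def using assms
    by (auto intro!: derivative_eq_intros has_real_derivative_sin_arccos_div
        simp: diff_divide_distrib sin_arccos mult_ac)
  moreover have "cos ((M - 1) * \<theta>) - cos ((M + 1) * \<theta>) = 2 * sin (M * \<theta>) * sin \<theta>"
    by (simp add: algebra_simps cos_add cos_diff)
  ultimately show ?thesis
    using pos assms by (simp add: sin_arccos_div_def \<theta>_def[symmetric])
qed

lemma signvecs_0: "signvecs 0 = {[]}"
  by (auto simp: signvecs_def)

lemma signvecs_Suc: "signvecs (Suc r) = (\<lambda>(xs, e). xs @ [e]) ` (signvecs r \<times> {-1, 1})"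
  unfolding signvecs_def by (auto simp: length_Suc_conv_rev image_iff)

lemma sum_signvecs_Suc:
  "(\<Sum>eps\<in>signvecs (Suc r). f eps) = (\<Sum>xs\<in>signvecs r. f (xs @ [-1]) + f (xs @ [1]))"
proof -
  have "inj_on (\<lambda>(xs, e). xs @ [e]) (signvecs r \<times> {-1, 1})"
    by (auto intro!: inj_onI)
  then have "(\<Sum>eps\<in>signvecs (Suc r). f eps)
      = (\<Sum>(xs, e)\<in>signvecs r \<times> {-1, 1}. f (xs @ [e]))"
    unfolding signvecs_Suc by (subst sum.reindex) (auto simp: case_prod_beta')
  also have "\<dots> = (\<Sum>xs\<in>signvecs r. f (xs @ [-1]) + f (xs @ [1]))"
    by (simp add: sum.cartesian_product[symmetric])
  finally show ?thesis .
qed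

lemma abs_sum_list_signvecs: "xs \<in> signvecs r \<Longrightarrow> \<bar>sum_list xs\<bar> \<le> int r"
proof (induction xs arbitrary: r)
  case Nil
  then show ?case by simp
next
  case (Cons e xs)
  then obtain r' where "r = Suc r'" "xs \<in> signvecs r'" "e \<in> {-1, 1}"
    by (auto simp: signvecs_def)
  with Cons.IH[of r'] show ?case by auto
qed

lemma beta_Nil [simp]: "beta n [] = 1"
  by (simp add: beta_def)

lemma beta_snoc: "beta n (xs @ [e]) = beta n xs * (2 * of_int (int n + sum_list xs))"
proof -
  have prefix:
    "2 * of_int (mseq n (xs @ [e]) (i - 1)) = (2 * of_int (mseq n xs (i - 1)) :: real)"
    if "i \<in> {1..length xs}" for i
    using that unfolding mseq_def by (auto intro!: sum.cong simp: nth_append)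
  have last: "mseq n (xs @ [e]) (length xs) = int n + sum_list xs"
    by (simp add: mseq_def sum_list_sum_nth lessThan_atLeast0 nth_append)
  have "beta n (xs @ [e]) = (\<Prod>i=1..length xs. 2 * of_int (mseq n (xs @ [e]) (i - 1)))
      * (2 * of_int (mseq n (xs @ [e]) (length xs)))"
    by (simp add: beta_def prod.nat_ivl_Suc')
  also have "\<dots> = beta n xs * (2 * of_int (int n + sum_list xs))"
    unfolding beta_def last by (simp only: prod.cong[OF refl prefix])
  finally show ?thesis .
qed

lemma beta_replicate_minus_one:
  "beta n (replicate r (-1)) = (\<Prod>i=1..r. 2 * real n - 2 * real i + 2)"
  by (induction r) (simp_all add: replicate_append_same[symmetric] beta_snoc prod.nat_ivl_Suc'
      sum_list_replicate algebra_simps)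

lemma beta_replicate_one: "beta n (replicate r 1) = (\<Prod>i=1..r. 2 * real n + 2 * real i - 2)"
  by (induction r) (simp_all add: replicate_append_same[symmetric] beta_snoc prod.nat_ivl_Suc'
      sum_list_replicate algebra_simps)

lemma beta_signvecs_bounds:
  assumes "xs \<in> signvecs r" "r \<le> n"
  shows "(\<Prod>i=1..r. 2 * real n - 2 * real i + 2) \<le> beta n xs
      \<and> beta n xs \<le> (\<Prod>i=1..r. 2 * real n + 2 * real i - 2)"
  using assms
proof (induction r arbitrary: xs)
  case 0
  then show ?case by (simp add: signvecs_def)
next
  case (Suc r)
  from Suc.prems(1) obtain ys e where xs: "xs = ys @ [e]" and ys: "ys \<in> signvecs r"
    unfolding signvecs_Suc by auto
  have IH: "(\<Prod>i=1..r. 2 * real n - 2 * real i + 2) \<le> beta n ys"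
      "beta n ys \<le> (\<Prod>i=1..r. 2 * real n + 2 * real i - 2)"
    using Suc ys by auto
  have "\<bar>of_int (sum_list ys)\<bar> \<le> real r"
    using abs_sum_list_signvecs[OF ys] by linarith
  then have factor: "2 * real n - 2 * real r \<le> 2 * of_int (int n + sum_list ys)"
      "2 * of_int (int n + sum_list ys) \<le> 2 * real n + 2 * real r"
    by auto
  have "0 \<le> (\<Prod>i=1..r. 2 * real n - 2 * real i + 2)"
    using Suc.prems(2) by (intro prod_nonneg) auto
  with IH factor Suc.prems(2) show ?case
    unfolding xs beta_snoc by (auto simp: prod.nat_ivl_Suc' intro!: mult_mono)
qed

definition signed_cheb_sum :: "nat \<Rightarrow> nat \<Rightarrow> real \<Rightarrow> real" where
  "signed_cheb_sum n r y = (\<Sum>eps\<in>signvecs r.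
     of_int (prod_list eps) * sin_arccos_div (of_int (int n + sum_list eps)) y / beta n eps)"

lemma signed_cheb_sum_Suc_has_derivative:
  assumes "-1 < x" "x < 1" "r + 2 \<le> n"
  shows "(signed_cheb_sum n (Suc r) has_real_derivative signed_cheb_sum n r x) (at x)"
proof -
  define c where "c xs = of_int (prod_list xs) / beta n xs" for xs
  define M where "M xs = (of_int (int n + sum_list xs) :: real)" for xs
  have split: "signed_cheb_sum n (Suc r) = (\<lambda>y. \<Sum>xs\<in>signvecs r.
      c xs * ((sin_arccos_div (M xs + 1) y - sin_arccos_div (M xs - 1) y) / (2 * M xs)))"
    by (intro ext) (simp add: signed_cheb_sum_def sum_signvecs_Suc beta_snoc c_def M_def add_ac
        add_diff_eq right_diff_distrib diff_divide_distrib)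
  have "M xs \<notin> {-1, 0, 1}" if "xs \<in> signvecs r" for xs
    using abs_sum_list_signvecs[OF that] assms(3) unfolding M_def by auto
  then have "(signed_cheb_sum n (Suc r) has_real_derivative
      (\<Sum>xs\<in>signvecs r. c xs * sin_arccos_div (M xs) x)) (at x)"
    unfolding split by (intro DERIV_sum DERIV_cmult sin_arccos_div_three_term assms)
  then show ?thesis
    by (simp add: signed_cheb_sum_def c_def M_def)
qed

lemma higher_deriv_signed_cheb_sum:
  assumes "r < n" "-1 < x" "x < 1"
  shows "(deriv ^^ r) (signed_cheb_sum n r) x = sin_arccos_div (real n) x"
  using assms
proof (induction r arbitrary: x)
  case 0
  then show ?case by (simp add: signed_cheb_sum_def signvecs_0)
next
  case (Suc r)
  have "eventually (\<lambda>y. deriv (signed_cheb_sum n (Suc r)) y = signed_cheb_sum n r y) (nhds x)"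
    using eventually_nhds_in_open[of "{-1<..<1}" x] Suc.prems
    by (auto elim!: eventually_mono intro!: DERIV_imp_deriv signed_cheb_sum_Suc_has_derivative)
  then have "(deriv ^^ Suc r) (signed_cheb_sum n (Suc r)) x
      = (deriv ^^ r) (signed_cheb_sum n r) x"
    unfolding funpow_Suc_right o_def by (intro higher_deriv_cong_ev) auto
  with Suc show ?case by simp
qed

lemma length_concat_map_pair: "length (concat (map (\<lambda>x. [f x, g x]) xs)) = 2 * length xs"
  by (induction xs) auto

lemma nth_concat_map_pair:
  "k < 2 * length xs \<Longrightarrow>
    concat (map (\<lambda>x. [f x, g x]) xs) ! k = (if even k then f else g) (xs ! (k div 2))"
proof (induction xs arbitrary: k)
  case Nil
  then show ?case by simp
next
  case (Cons x xs)
  show ?case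
  proof (cases k)
    case (Suc m)
    with Cons show ?thesis by (cases m) auto
  qed simp
qed

fun lex_signvecs :: "nat \<Rightarrow> int list list" where
  "lex_signvecs 0 = [[]]"
| "lex_signvecs (Suc r) = concat (map (\<lambda>xs. [xs @ [-1], xs @ [1]]) (lex_signvecs r))"

lemma length_lex_signvecs [simp]: "length (lex_signvecs r) = 2 ^ r"
  by (induction r) (simp_all add: length_concat_map_pair)

lemma nth_lex_signvecs_Suc:
  "k < 2 ^ Suc r \<Longrightarrow>
    lex_signvecs (Suc r) ! k = lex_signvecs r ! (k div 2) @ [if even k then -1 else 1]"
  by (simp add: nth_concat_map_pair)

lemma set_lex_signvecs: "set (lex_signvecs r) = signvecs r"
  by (induction r) (auto simp: signvecs_0 signvecs_Suc)

declare lex_signvecs.simps(2) [simp del]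

lemma list_less_append_same_length:
  "(xs :: 'a :: order list) < ys \<Longrightarrow> length ys \<le> length xs \<Longrightarrow> xs @ us < ys @ vs"
  unfolding list_less_def by (rule lexord_sufI)

lemma sorted_lex_signvecs: "sorted_wrt (<) (lex_signvecs r)"
proof (induction r)
  case 0
  then show ?case by simp
next
  case (Suc r)
  have "lex_signvecs (Suc r) ! k < lex_signvecs (Suc r) ! Suc k" if "Suc k < 2 ^ Suc r" for k
  proof (cases "even k")
    case True
    then show ?thesis
      using that by (simp add: nth_lex_signvecs_Suc list_less_def lexord_same_pref_iff)
  next
    case False
    then have half: "Suc k div 2 = Suc (k div 2)"
      by presburger
    have "Suc k div 2 < 2 ^ r"
      using that by (intro less_mult_imp_div_less) (simp add: mult.commute)
    then have "Suc (k div 2) < 2 ^ r"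
      unfolding half .
    then have "lex_signvecs r ! (k div 2) < lex_signvecs r ! (Suc k div 2)"
      using sorted_wrt_nth_less[OF Suc.IH] by (simp add: half)
    moreover have "length (lex_signvecs r ! i) = r" if "i < 2 ^ r" for i
      using that nth_mem[of i "lex_signvecs r"] by (simp add: set_lex_signvecs signvecs_def)
    ultimately show ?thesis
      using that \<open>Suc (k div 2) < 2 ^ r\<close>
      by (simp add: nth_lex_signvecs_Suc list_less_append_same_length)
  qed
  then show ?case
    by (simp add: sorted_wrt_iff_nth_Suc_transp)
qed

lemma sorted_list_of_set_signvecs: "sorted_list_of_set (signvecs r) = lex_signvecs r"
  by (rule strict_sorted_equal)
    (simp_all add: sorted_lex_signvecs set_lex_signvecs[symmetric])

lemma sv_eq_nth_lex_signvecs: "sv r j = lex_signvecs r ! (j - 1)"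
  by (simp add: sv_def sorted_list_of_set_signvecs)

lemma sum_sv_eq_sum_signvecs: "(\<Sum>j=1..2^r. f (sv r j)) = (\<Sum>eps\<in>signvecs r. f eps)"
proof -
  have "(\<Sum>j=1..2^r. f (sv r j)) = (\<Sum>k<2^r. f (lex_signvecs r ! k))"
    by (simp add: sum.atLeast1_atMost_eq sv_eq_nth_lex_signvecs)
  also have "\<dots> = sum_list (map f (lex_signvecs r))"
    by (simp add: sum_list_sum_nth atLeast0LessThan)
  also have "\<dots> = (\<Sum>eps\<in>signvecs r. f eps)"
    using sorted_lex_signvecs[of r]
    by (simp add: strict_sorted_iff sum_list_distinct_conv_sum_set set_lex_signvecs)
  finally show ?thesis .
qed

lemma sv_in_signvecs: "1 \<le> j \<Longrightarrow> j \<le> 2^r \<Longrightarrow> sv r j \<in> signvecs r"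
  using nth_mem[of "j - 1" "lex_signvecs r"]
  by (simp add: sv_eq_nth_lex_signvecs set_lex_signvecs)

lemma sv_Suc_pair:
  assumes "1 \<le> j" "j \<le> 2^r"
  shows "sv (Suc r) (2*j - 1) = sv r j @ [-1] \<and> sv (Suc r) (2*j) = sv r j @ [1]"
proof -
  have "(2*j - 1 - 1) div 2 = j - 1" "(2*j - 1) div 2 = j - 1" "odd (2*j - 1)"
    using assms by presburger+
  with assms show ?thesis
    by (simp add: sv_eq_nth_lex_signvecs nth_lex_signvecs_Suc)
qed

lemma sv_first: "sv r 1 = replicate r (-1)"
proof (induction r)
  case 0
  then show ?case by (simp add: sv_eq_nth_lex_signvecs)
next
  case (Suc r)
  then show ?case
    using sv_Suc_pair[of 1 r] by (simp add: replicate_append_same)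
qed

lemma sv_last: "sv r (2^r) = replicate r 1"
proof (induction r)
  case 0
  then show ?case by (simp add: sv_eq_nth_lex_signvecs)
next
  case (Suc r)
  then show ?case
    using sv_Suc_pair[of "2^r" r] by (simp add: replicate_append_same)
qed

lemma chebS_eq_higher_deriv_sum_sv:
  assumes "r < n" "-1 < x" "x < 1"
  shows "chebS n x = (deriv ^^ r) (\<lambda>y. \<Sum>j=1..2^r. of_int (prod_list (sv r j)) *
           chebS (nat (int n + sum_list (sv r j))) y / beta n (sv r j)) x"
    (is "_ = (deriv ^^ r) ?f x")
proof -
  have "?f y = signed_cheb_sum n r y" if "y \<in> {-1<..<1}" for y
  proof -
    have "chebS (nat (int n + sum_list eps)) y
        = sin_arccos_div (of_int (int n + sum_list eps)) y"
      if "eps \<in> signvecs r" for eps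
      using abs_sum_list_signvecs[OF that] assms(1) \<open>y \<in> {-1<..<1}\<close>
      by (simp add: chebS_eq_sin_arccos_div)
    moreover have "?f y = (\<Sum>eps\<in>signvecs r.
        of_int (prod_list eps) * chebS (nat (int n + sum_list eps)) y / beta n eps)"
      by (rule sum_sv_eq_sum_signvecs)
    ultimately show ?thesis
      unfolding signed_cheb_sum_def by simp
  qed
  then have "eventually (\<lambda>y. ?f y = signed_cheb_sum n r y) (nhds x)"
    using eventually_nhds_in_open[of "{-1<..<1}" x] assms by (auto elim!: eventually_mono)
  then have "(deriv ^^ r) ?f x = (deriv ^^ r) (signed_cheb_sum n r) x"
    by (intro higher_deriv_cong_ev refl)
  with assms show ?thesis
    by (simp add: higher_deriv_signed_cheb_sum chebS_eq_sin_arccos_div)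
qed

theorem lemma1:
  fixes n r :: nat
  assumes "n \<ge> 2" and "1 \<le> r" and "r \<le> n - 1"
  shows "(\<forall>x::real. -1 < x \<and> x < 1 \<longrightarrow>
           chebS n x =
           (deriv ^^ r)
             (\<lambda>y. \<Sum>j=1..2^r. of_int (prod_list (sv r j)) *
                  chebS (nat (int n + sum_list (sv r j))) y / beta n (sv r j)) x)
       \<and> beta n (sv r 1) = beta n (sv r 2)
       \<and> beta n (sv r 1) = (\<Prod>i=1..r. 2 * real n - 2 * real i + 2)
       \<and> beta n (sv r (2^r - 1)) = beta n (sv r (2^r))
       \<and> beta n (sv r (2^r)) = (\<Prod>i=1..r. 2 * real n + 2 * real i - 2)
       \<and> (\<forall>j. 1 \<le> j \<and> j \<le> 2^(r-1) \<longrightarrow>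
            beta n (sv r (2*j - 1)) = beta n (sv r (2*j))
            \<and> beta n (sv r 1) \<le> beta n (sv r (2*j - 1))
            \<and> beta n (sv r (2*j)) \<le> beta n (sv r (2^r)))"
proof -
  obtain r' where r: "r = Suc r'"
    using assms(2) by (cases r) auto
  have "r < n"
    using assms by linarith
  have first: "beta n (sv r 1) = (\<Prod>i=1..r. 2 * real n - 2 * real i + 2)"
    unfolding sv_first by (rule beta_replicate_minus_one)
  have last: "beta n (sv r (2^r)) = (\<Prod>i=1..r. 2 * real n + 2 * real i - 2)"
    unfolding sv_last by (rule beta_replicate_one)
  have pair: "beta n (sv r (2*j - 1)) = beta n (sv r (2*j))" if "1 \<le> j" "j \<le> 2^r'" for j
    using sv_Suc_pair[OF that] by (simp add: r beta_snoc)
  have bounds: "beta n (sv r 1) \<le> beta n (sv r j) \<and> beta n (sv r j) \<le> beta n (sv r (2^r))"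
    if "1 \<le> j" "j \<le> 2^r" for j
    unfolding first last
    using beta_signvecs_bounds[OF sv_in_signvecs[OF that], of n] \<open>r < n\<close> by simp
  have "beta n (sv r 1) = beta n (sv r 2)" "beta n (sv r (2^r - 1)) = beta n (sv r (2^r))"
    using pair[of 1] pair[of "2^r'"] by (simp_all add: r)
  moreover have "beta n (sv r (2*j - 1)) = beta n (sv r (2*j))
      \<and> beta n (sv r 1) \<le> beta n (sv r (2*j - 1))
      \<and> beta n (sv r (2*j)) \<le> beta n (sv r (2^r))"
    if "1 \<le> j" "j \<le> 2^(r-1)" for j
    using that pair[of j] bounds[of "2*j - 1"] bounds[of "2*j"] by (simp add: r)
  ultimately show ?thesis
    using chebS_eq_higher_deriv_sum_sv[OF \<open>r < n\<close>] first last by blast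
qed

end
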